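(* For a real number $k\ge 1$, let $x_0(k)$ be the unique root of the equation $x-1-x^{\frac{k-1}{k}}=0$ in the interval $[1,\infty)$. Then $2\le x_0(k)<\max(k,e+2)$. *)

theory Defs
  imports Complex_Main
begin

definition x0 :: "real \<Rightarrow> real" where
  "x0 k = (THE x. 1 \<le> x \<and> x - 1 - x powr ((k - 1) / k) = 0)"

end

theory Submission
  imports Defs
begin

text \<open>Write \<open>a = (k - 1) / k \<in> [0, 1)\<close>. On \<open>[1, \<infinity>)\<close> the root equation \<open>x - 1 = x powr a\<close> says
  that \<open>(x - 1) / x powr a = x powr (1 - a) - x powr (-a)\<close> equals 1; this function is strictly
  increasing, so there is at most one root. The function \<open>x - 1 - x powr a\<close> is negative at 1
  and positive at \<open>M = max k (e + 2)\<close>, because \<open>(M - 1) ln M > M \<ge> k\<close> gives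
  \<open>M powr (1/k) = exp (ln M / k) > 1 + 1 / (M - 1)\<close>; so the intermediate value theorem puts the
  root in \<open>[1, M)\<close>.
  Finally \<open>x - 1 = x powr a \<ge> 1\<close> at the root, so it is at least 2.\<close>

lemma strict_mono_on_minus_one_div_powr:
  fixes a :: real
  assumes "0 \<le> a" "a < 1"
  shows "strict_mono_on {1..} (\<lambda>x. (x - 1) / x powr a)"
proof (rule strict_mono_onI)
  fix x y :: real
  assume "x \<in> {1..}" "y \<in> {1..}" "x < y"
  then have "x \<ge> 1" "x < y" by auto
  have as_difference: "(z - 1) / z powr a = z powr (1 - a) - z powr (-a)" if "z \<ge> 1" for z :: real
    using that by (simp add: diff_divide_distrib powr_diff powr_minus_divide)
  have "x powr (1 - a) < y powr (1 - a)"
    using \<open>x \<ge> 1\<close> \<open>x < y\<close> \<open>a < 1\<close> by (intro powr_less_mono2) auto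
  moreover have "y powr (-a) \<le> x powr (-a)"
    using \<open>x \<ge> 1\<close> \<open>x < y\<close> \<open>0 \<le> a\<close> by (intro powr_mono2') auto
  ultimately show "(x - 1) / x powr a < (y - 1) / y powr a"
    using as_difference[of x] as_difference[of y] \<open>x \<ge> 1\<close> \<open>x < y\<close> by simp
qed

lemma minus_one_eq_powr_unique:
  fixes a x y :: real
  assumes "0 \<le> a" "a < 1"
    and "1 \<le> x" "x - 1 - x powr a = 0"
    and "1 \<le> y" "y - 1 - y powr a = 0"
  shows "x = y"
proof -
  have "(y - 1) / y powr a = (x - 1) / x powr a"
    using assms by simp
  with strict_mono_on_minus_one_div_powr[OF \<open>0 \<le> a\<close> \<open>a < 1\<close>] show ?thesis
    by (rule strict_mono_on_eqD) (use assms in auto)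
qed

lemma minus_one_eq_powr_exists_less:
  fixes a M :: real
  assumes "1 \<le> M" "M powr a < M - 1"
  shows "\<exists>x. 1 \<le> x \<and> x < M \<and> x - 1 - x powr a = 0"
proof -
  have "\<exists>x\<ge>1. x \<le> M \<and> x - 1 - x powr a = 0"
  proof (rule IVT)
    show "\<forall>x. 1 \<le> x \<and> x \<le> M \<longrightarrow> isCont (\<lambda>x. x - 1 - x powr a) x"
      by (auto intro!: continuous_intros)
  qed (use assms in auto)
  then obtain x where "1 \<le> x" "x \<le> M" "x - 1 - x powr a = 0"
    by blast
  moreover have "x \<noteq> M"
    using assms \<open>x - 1 - x powr a = 0\<close> by auto
  ultimately show ?thesis
    by (intro exI[of _ x]) simp
qed

lemma minus_one_eq_powr_ge_two:
  fixes a x :: real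
  assumes "0 \<le> a" "1 \<le> x" "x - 1 - x powr a = 0"
  shows "2 \<le> x"
  using ge_one_powr_ge_zero[OF \<open>1 \<le> x\<close> \<open>0 \<le> a\<close>] assms(3) by linarith

lemma powr_frac_lt_minus_one:
  fixes k M :: real
  assumes "k > 0" "M > 1" "(M - 1) * ln M > k"
  shows "M powr ((k - 1) / k) < M - 1"
proof -
  have "M / (M - 1) = 1 + 1 / (M - 1)"
    using \<open>M > 1\<close> by (simp add: field_simps)
  also have "\<dots> < 1 + ln M / k"
    using assms by (simp add: field_simps)
  also have "\<dots> \<le> exp (ln M / k)"
    by (rule exp_ge_add_one_self)
  also have "\<dots> = M powr (1 / k)"
    using \<open>M > 1\<close> by (simp add: powr_def)
  finally have "M < (M - 1) * M powr (1 / k)"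
    using \<open>M > 1\<close> by (simp add: field_simps)
  moreover have "M powr ((k - 1) / k) = M / M powr (1 / k)"
    using \<open>k > 0\<close> \<open>M > 1\<close> by (simp add: diff_divide_distrib powr_diff)
  moreover have "M powr (1 / k) > 0"
    using \<open>M > 1\<close> by simp
  ultimately show ?thesis
    by (simp add: pos_divide_less_eq mult.commute)
qed

lemma minus_one_mult_ln_gt_self:
  fixes M :: real
  assumes "M \<ge> exp 1 + 2"
  shows "(M - 1) * ln M > M"
proof -
  have "M > 2"
    using assms exp_gt_zero[of 1] by linarith
  have "1 - ln M = ln (exp 1 / M)"
    using \<open>M > 2\<close> by (simp add: ln_div)
  also have "\<dots> \<le> exp 1 / M - 1"
    using \<open>M > 2\<close> by (intro ln_le_minus_one) simp
  finally have "2 - exp 1 / M \<le> ln M"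
    by linarith
  then have "(M - 1) * (2 - exp 1 / M) \<le> (M - 1) * ln M"
    using \<open>M > 2\<close> by (intro mult_left_mono) auto
  moreover have "(M - 1) * (2 - exp 1 / M) = 2 * M - 2 - exp 1 + exp 1 / M"
    using \<open>M > 2\<close> by (simp add: field_simps)
  moreover have "exp 1 / M > 0"
    using \<open>M > 2\<close> by simp
  ultimately show ?thesis
    using assms by linarith
qed

theorem lemma3p2:
  fixes k :: real
  assumes "k \<ge> 1"
  shows "(\<exists>!x. 1 \<le> x \<and> x - 1 - x powr ((k - 1) / k) = 0)
         \<and> 2 \<le> x0 k \<and> x0 k < max k (exp 1 + 2)"
proof -
  define a where "a = (k - 1) / k"
  define M where "M = max k (exp 1 + 2)"
  have "0 \<le> a" "a < 1"
    using assms by (auto simp: a_def field_simps)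
  have "M \<ge> exp 1 + 2" "M \<ge> k"
    by (simp_all add: M_def)
  then have "M > 1"
    using exp_gt_zero[of 1] by linarith
  moreover have "(M - 1) * ln M > k"
    using minus_one_mult_ln_gt_self[OF \<open>M \<ge> exp 1 + 2\<close>] \<open>M \<ge> k\<close> by linarith
  ultimately have "M powr a < M - 1"
    unfolding a_def using assms by (intro powr_frac_lt_minus_one) auto
  then obtain r where r: "1 \<le> r" "r < M" "r - 1 - r powr a = 0"
    using minus_one_eq_powr_exists_less[of M a] \<open>M > 1\<close> by auto
  have unique: "\<exists>!x. 1 \<le> x \<and> x - 1 - x powr a = 0"
    using r minus_one_eq_powr_unique[OF \<open>0 \<le> a\<close> \<open>a < 1\<close>] by blast
  then have "x0 k = r"
    unfolding x0_def a_def[symmetric] using r by (blast intro: the1_equality)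
  moreover have "2 \<le> r"
    using minus_one_eq_powr_ge_two \<open>0 \<le> a\<close> r by blast
  ultimately show ?thesis
    using unique r unfolding a_def M_def by simp
qed

end
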